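(* Let $\boldsymbol{\omega}\in\mathbb{R}^d$, $\tau>d-1$, and let $\gamma>0$ be a constant such that (a) $\delta_j(\boldsymbol{\omega}\cdot\boldsymbol{\nu})\ge\gamma|\boldsymbol{\nu}|^{-\tau}$ for all $j$ and all $\boldsymbol{\nu}\ne\boldsymbol{0},\sigma(\boldsymbol{\nu},j)\boldsymbol{e}_j$, and (b) $\delta_j(\boldsymbol{\omega}\cdot\boldsymbol{\nu})+\delta_{j'}(\boldsymbol{\omega}\cdot\boldsymbol{\nu}')\ge\gamma|\boldsymbol{\nu}-\boldsymbol{\nu}'|^{-\tau}$ for all $j,j'\in\{1,\ldots,d\}$ and all $\boldsymbol{\nu}\ne\boldsymbol{\nu}'$ with $\boldsymbol{\nu}-\boldsymbol{\nu}'\ne\sigma(\boldsymbol{\nu},j)\boldsymbol{e}_j-\sigma(\boldsymbol{\nu}',j')\boldsymbol{e}_{j'}$. Let $\boldsymbol{\nu},\boldsymbol{\nu}'\in\mathbb{Z}^d$ with $\boldsymbol{\nu}\ne\boldsymbol{\nu}'$ and suppose that for some $n\in\{0,1,2,\ldots\}$ and $j,j'\in\{1,\ldots,d\}$ one has $\delta_j(\boldsymbol{\omega}\cdot\boldsymbol{\nu})\le2^{-n}\gamma$ and $\delta_{j'}(\boldsymbol{\omega}\cdot\boldsymbol{\nu}')\le2^{-n}\gamma$. Then either $|\boldsymbol{\nu}-\boldsymbol{\nu}'|>2^{(n-2)/\tau}$, or $|\boldsymbol{\nu}-\boldsymbol{\nu}'|=2$ and $\delta_j(\boldsymbol{\o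mega}\cdot\boldsymbol{\nu})=\delta_{j'}(\boldsymbol{\omega}\cdot\boldsymbol{\nu}')$.
   Context: $|\boldsymbol{\nu}|=|\nu_1|+\cdots+|\nu_d|$; $\boldsymbol{e}_j$ is the $j$-th standard basis vector. For $j\in\{1,\ldots,d\}$ and $\boldsymbol{\nu}\in\mathbb{Z}^d$, $\delta_j(\boldsymbol{\omega}\cdot\boldsymbol{\nu}):=\min\{|\boldsymbol{\omega}\cdot\boldsymbol{\nu}-\omega_j|,|\boldsymbol{\omega}\cdot\boldsymbol{\nu}+\omega_j|\}=|\boldsymbol{\omega}\cdot(\boldsymbol{\nu}-\sigma(\boldsymbol{\nu},j)\boldsymbol{e}_j)|$, where $\sigma(\boldsymbol{\nu},j)\in\{\pm1\}$ is a minimizer. (Such a $\gamma$ exists when $\boldsymbol{\omega}$ satisfies $|\boldsymbol{\omega}\cdot\boldsymbol{\nu}|>\gamma_0|\boldsymbol{\nu}|^{-\tau}$ for all nonzero $\boldsymbol{\nu}\in\mathbb{Z}^d$.) *)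

theory Defs
  imports "HOL-Analysis.Analysis"
begin

text \<open>Vectors in Z^d and R^d are indexed by a finite type 'd, with d = CARD('d).\<close>

definition l1norm :: "int^'d \<Rightarrow> int" where
  "l1norm \<nu> = (\<Sum>i\<in>UNIV. \<bar>\<nu> $ i\<bar>)"

definition dotw :: "real^'d \<Rightarrow> int^'d \<Rightarrow> real" where
  "dotw \<omega> \<nu> = (\<Sum>i\<in>UNIV. \<omega> $ i * of_int (\<nu> $ i))"

definition unitv :: "'d \<Rightarrow> int^'d" where
  "unitv j = (\<chi> i. if i = j then 1 else 0)"

definition delta :: "real^'d \<Rightarrow> 'd \<Rightarrow> int^'d \<Rightarrow> real" where
  "delta \<omega> j \<nu> = min \<bar>dotw \<omega> \<nu> - \<omega> $ j\<bar> \<bar>dotw \<omega> \<nu> + \<omega> $ j\<bar>"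

end

theory Submission
  imports Defs
begin

text \<open>If \<open>\<nu> - \<nu>'\<close> is the exceptional difference \<open>\<sigma>(\<nu>,j) e\<^sub>j - \<sigma>(\<nu>',j') e\<^sub>j'\<close>, then
  \<open>\<nu> - \<sigma>(\<nu>,j) e\<^sub>j = \<nu>' - \<sigma>(\<nu>',j') e\<^sub>j'\<close>, so both small divisors are the same number, and the
  difference, being nonzero, has norm 2. Otherwise condition (b) bounds
  \<open>\<gamma> |\<nu> - \<nu>'|\<^sup>-\<^sup>\<tau>\<close> by the sum of the two small divisors, i.e. by \<open>2\<^sup>1\<^sup>-\<^sup>n \<gamma>\<close>, which
  gives \<open>|\<nu> - \<nu>'| \<ge> 2\<^sup>(\<^sup>n\<^sup>-\<^sup>1\<^sup>)\<^sup>/\<^sup>\<tau>\<close>.\<close>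

lemma l1norm_signed_unitv_diff:
  fixes a b :: int and k k' :: "'d::finite"
  assumes "a \<in> {1, -1}" "b \<in> {1, -1}"
    and nonzero: "of_int a *s unitv k - of_int b *s unitv k' \<noteq> (0::int^'d)"
  shows "l1norm (of_int a *s unitv k - of_int b *s unitv k') = 2"
proof (cases "k = k'")
  case True
  with nonzero have "a \<noteq> b" by auto
  have "l1norm (of_int a *s unitv k - of_int b *s unitv k')
      = (\<Sum>i\<in>UNIV. if i = k then \<bar>a - b\<bar> else 0)"
    unfolding l1norm_def unitv_def True by (intro sum.cong) auto
  also have "\<dots> = 2" using assms \<open>a \<noteq> b\<close> by auto
  finally show ?thesis .
next
  case False
  have "l1norm (of_int a *s unitv k - of_int b *s unitv k')
      = (\<Sum>i\<in>UNIV. (if i = k then \<bar>a\<bar> else 0) + (if i = k' then \<bar>b\<bar> else 0))"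
    unfolding l1norm_def unitv_def using False by (intro sum.cong) auto
  also have "\<dots> = 2" using assms by (auto simp: sum.distrib)
  finally show ?thesis .
qed

lemma l1norm_ge_one:
  fixes \<mu> :: "int^'d::finite"
  assumes "\<mu> \<noteq> 0"
  shows "l1norm \<mu> \<ge> 1"
proof -
  obtain i where "\<mu> $ i \<noteq> 0"
    using assms by (metis vec_eq_iff zero_index)
  moreover have "\<bar>\<mu> $ i\<bar> \<le> l1norm \<mu>"
    unfolding l1norm_def by (rule member_le_sum) auto
  ultimately show ?thesis by linarith
qed

lemma gt_powr_of_powr_neg_le:
  fixes N \<tau> :: real and n :: nat
  assumes "N > 0" "\<tau> > 0"
    and bound: "N powr (-\<tau>) \<le> 2 powr (1 - real n)"
  shows "N > 2 powr ((real n - 2) / \<tau>)"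
proof -
  have "2 powr ((real n - 2) / \<tau>) < 2 powr ((real n - 1) / \<tau>)"
    using \<open>\<tau> > 0\<close> by (simp add: divide_strict_right_mono)
  also have "\<dots> = 2 powr ((1 - real n) * (- 1 / \<tau>))"
    by (rule arg_cong[where f = "\<lambda>x. 2 powr x"]) (simp add: divide_simps)
  also have "\<dots> = (2 powr (1 - real n)) powr (- 1 / \<tau>)"
    by (simp add: powr_powr)
  also have "\<dots> \<le> (N powr (-\<tau>)) powr (- 1 / \<tau>)"
    using bound \<open>\<tau> > 0\<close> \<open>N > 0\<close> by (intro powr_mono2') auto
  also have "\<dots> = N"
    using \<open>\<tau> > 0\<close> \<open>N > 0\<close> by (simp add: powr_powr)
  finally show ?thesis .
qed

theorem lemma3p2:
  fixes \<omega> :: "real^'d" and \<tau> \<gamma> :: real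
    and \<sigma> :: "int^'d \<Rightarrow> 'd \<Rightarrow> int"
    and \<nu> \<nu>' :: "int^'d" and n :: nat and j j' :: 'd
  assumes tau: "\<tau> > real CARD('d) - 1"
    and gamma: "\<gamma> > 0"
    and sigma_pm: "\<And>\<mu> k. \<sigma> \<mu> k \<in> {1, -1}"
    and sigma_min: "\<And>\<mu> k. delta \<omega> k \<mu> = \<bar>dotw \<omega> (\<mu> - of_int (\<sigma> \<mu> k) *s unitv k)\<bar>"
    and cond_a: "\<And>\<mu> k. \<mu> \<noteq> 0 \<Longrightarrow> \<mu> \<noteq> of_int (\<sigma> \<mu> k) *s unitv k \<Longrightarrow>
                    delta \<omega> k \<mu> \<ge> \<gamma> * real_of_int (l1norm \<mu>) powr (-\<tau>)"
    and cond_b: "\<And>\<mu> \<mu>' k k'. \<mu> \<noteq> \<mu>' \<Longrightarrow>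
                    \<mu> - \<mu>' \<noteq> of_int (\<sigma> \<mu> k) *s unitv k - of_int (\<sigma> \<mu>' k') *s unitv k' \<Longrightarrow>
                    delta \<omega> k \<mu> + delta \<omega> k' \<mu>' \<ge> \<gamma> * real_of_int (l1norm (\<mu> - \<mu>')) powr (-\<tau>)"
    and neq: "\<nu> \<noteq> \<nu>'"
    and small1: "delta \<omega> j \<nu> \<le> 2 powi (- int n) * \<gamma>"
    and small2: "delta \<omega> j' \<nu>' \<le> 2 powi (- int n) * \<gamma>"
  shows "real_of_int (l1norm (\<nu> - \<nu>')) > 2 powr ((real n - 2) / \<tau>)
         \<or> (l1norm (\<nu> - \<nu>') = 2 \<and> delta \<omega> j \<nu> = delta \<omega> j' \<nu>')"
proof (cases "\<nu> - \<nu>' = of_int (\<sigma> \<nu> j) *s unitv j - of_int (\<sigma> \<nu>' j') *s unitv j'")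
  case exceptional: True
  then have "\<nu> - of_int (\<sigma> \<nu> j) *s unitv j = \<nu>' - of_int (\<sigma> \<nu>' j') *s unitv j'"
    by (simp add: algebra_simps)
  then have "delta \<omega> j \<nu> = delta \<omega> j' \<nu>'"
    using sigma_min[of j \<nu>] sigma_min[of j' \<nu>'] by simp
  moreover have "l1norm (\<nu> - \<nu>') = 2"
    unfolding exceptional using sigma_pm exceptional neq
    by (intro l1norm_signed_unitv_diff) auto
  ultimately show ?thesis by simp
next
  case False
  have "CARD('d) \<ge> 1"
    using finite_UNIV_card_ge_0[where 'a='d] by simp
  with tau have "\<tau> > 0" by linarith
  have N: "real_of_int (l1norm (\<nu> - \<nu>')) \<ge> 1"
    using l1norm_ge_one[of "\<nu> - \<nu>'"] neq by simp
  have "2 powi (- int n) * \<gamma> = 2 powr (- real n) * \<gamma>"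
    by (simp add: power_int_minus powr_minus powr_realpow)
  then have "\<gamma> * real_of_int (l1norm (\<nu> - \<nu>')) powr (-\<tau>)
      \<le> 2 powr (- real n) * \<gamma> + 2 powr (- real n) * \<gamma>"
    using cond_b[OF neq False] small1 small2 by linarith
  also have "\<dots> = \<gamma> * 2 powr (1 - real n)"
    by (simp add: powr_diff powr_minus field_simps)
  finally have "real_of_int (l1norm (\<nu> - \<nu>')) powr (-\<tau>) \<le> 2 powr (1 - real n)"
    using gamma by simp
  then show ?thesis
    using N \<open>\<tau> > 0\<close> by (simp add: gt_powr_of_powr_neg_le)
qed

end
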